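(* Let $T^{\natural}=(S^{\natural},I^{\natural},R^{\natural},V^{\natural})$ be an infinite-state transition system, $\varphi$ a set of predicates with $V(\varphi)\subseteq V^{\natural}_{int}$, and $T^{\sharp}=(S^{\sharp},I^{\sharp},R^{\sharp},V^{\sharp})$ the partially predicate abstracted transition system defined in the context. For every ACTL formula $f^{\sharp}$ over the variables of $T^{\sharp}$, if $T^{\sharp}\models f^{\sharp}$ then $T^{\natural}\models\gamma(f^{\sharp})$.
   Context: A transition system $T=(S,I,R,V)$ has variables $V=V_{bool}\cup V_{int}$, states $S\subseteq\mathcal{B}^{|V_{bool}|}\times\mathcal{Z}^{|V_{int}|}$, initial states $I\subseteq S$, transition relation $R\subseteq S\times S$; $T\models f$ means every initial state satisfies $f$. ACTL is the universal fragment of CTL. Given predicates $\varphi=\{\varphi_1,\dots,\varphi_n\}$ over integer variables, $V(\varphi)$ is the set of their variables, $\varphi_i'$ their primed (next-state) versions; fresh booleans $b_i,b_i'$ stand for $\varphi_i,\varphi_i'$. $\alpha(s)=\exists V(\varphi).(s\wedge\bigwedge_i(\varphi_i\iff b_i))$; with $CS=\bigwedge_i\big((\bigwedge_{v\in V(\varphi_i)}v'=v)\implies(b_i'\iff b_i)\big)$, $\alpha^{\tau}(r)=\exists V(\varphi).\exists V(\varphi').\big(r\wedge CS\wedge\bigwedge_i(\varphi_i\iff b_i)\wedge\bigwedge_i(\varphi_i'\iff b_i')\big)$. $T^{\sharp}$ has variables $V^{\sharp}=(V^{\natural}\cup\{b_i\})\setminus V(\varphi)$, $S^{\sharp}=\bigcup_{s\in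 S^{\natural}}\alpha(s)$, $I^{\sharp}=\bigcup_{s\in I^{\natural}}\alpha(s)$, $R^{\sharp}=\bigcup_{r\in R^{\natural}}\alpha^{\tau}(r)$. For a state formula $a$ over $V^{\sharp}$, $\gamma(a)=a[\bar\varphi/\bar b]$ (replace each $b_i$ by $\varphi_i$); for a temporal formula $f^{\sharp}$, $\gamma(f^{\sharp})$ is obtained by recursively replacing every atomic subformula $a$ of $f^{\sharp}$ by $\gamma(a)$, keeping the temporal and boolean structure. *)

theory Defs
  imports Main
begin

text \<open>A (concrete) state is a valuation of boolean and integer variables,
  variables being names of type 'v.  Abstract states additionally carry the
  fresh boolean variables b_i, encoded as Inr i.\<close>

type_synonym 'v cstate = "('v \<Rightarrow> bool) \<times> ('v \<Rightarrow> int)"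
type_synonym 'v astate = "(('v + nat) \<Rightarrow> bool) \<times> ('v \<Rightarrow> int)"

text \<open>A predicate over integer variables: its variable set V(phi_i) and its meaning.\<close>
type_synonym 'v pred = "'v set \<times> (('v \<Rightarrow> int) \<Rightarrow> bool)"

record 's ts =
  St :: "'s set"
  Init :: "'s set"
  Rel :: "('s \<times> 's) set"

definition wf_ts :: "'s ts \<Rightarrow> bool" where
  "wf_ts T \<longleftrightarrow> Init T \<subseteq> St T \<and> Rel T \<subseteq> St T \<times> St T"

text \<open>ACTL in negation normal form; atoms are state formulas (given semantically),
  so negated atoms are atoms.\<close>
datatype 's actl =
    Atom "'s \<Rightarrow> bool"
  | Conj "'s actl" "'s actl"
  | Disj "'s actl" "'s actl"
  | AX "'s actl"
  | AU "'s actl" "'s actl"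
  | AR "'s actl" "'s actl"

definition paths :: "('s \<times> 's) set \<Rightarrow> 's \<Rightarrow> (nat \<Rightarrow> 's) set" where
  "paths R s = {\<pi>. \<pi> 0 = s \<and> (\<forall>k. (\<pi> k, \<pi> (Suc k)) \<in> R)}"

fun holds :: "('s \<times> 's) set \<Rightarrow> 's actl \<Rightarrow> 's \<Rightarrow> bool" where
  "holds R (Atom a) s = a s"
| "holds R (Conj f g) s = (holds R f s \<and> holds R g s)"
| "holds R (Disj f g) s = (holds R f s \<or> holds R g s)"
| "holds R (AX f) s = (\<forall>\<pi>\<in>paths R s. holds R f (\<pi> 1))"
| "holds R (AU f g) s = (\<forall>\<pi>\<in>paths R s. \<exists>k. holds R g (\<pi> k) \<and> (\<forall>j<k. holds R f (\<pi> j)))"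
| "holds R (AR f g) s = (\<forall>\<pi>\<in>paths R s. \<forall>k. holds R g (\<pi> k) \<or> (\<exists>j<k. holds R f (\<pi> j)))"

definition models :: "'s ts \<Rightarrow> 's actl \<Rightarrow> bool" (infix "\<Turnstile>" 50) where
  "T \<Turnstile> f \<longleftrightarrow> (\<forall>s\<in>Init T. holds (Rel T) f s)"

fun atoms :: "'s actl \<Rightarrow> ('s \<Rightarrow> bool) set" where
  "atoms (Atom a) = {a}"
| "atoms (Conj f g) = atoms f \<union> atoms g"
| "atoms (Disj f g) = atoms f \<union> atoms g"
| "atoms (AX f) = atoms f"
| "atoms (AU f g) = atoms f \<union> atoms g"
| "atoms (AR f g) = atoms f \<union> atoms g"

fun map_atoms :: "(('s \<Rightarrow> bool) \<Rightarrow> ('t \<Rightarrow> bool)) \<Rightarrow> 's actl \<Rightarrow> 't actl" where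
  "map_atoms h (Atom a) = Atom (h a)"
| "map_atoms h (Conj f g) = Conj (map_atoms h f) (map_atoms h g)"
| "map_atoms h (Disj f g) = Disj (map_atoms h f) (map_atoms h g)"
| "map_atoms h (AX f) = AX (map_atoms h f)"
| "map_atoms h (AU f g) = AU (map_atoms h f) (map_atoms h g)"
| "map_atoms h (AR f g) = AR (map_atoms h f) (map_atoms h g)"

definition Vphi :: "'v pred list \<Rightarrow> 'v set" where
  "Vphi ps = (\<Union>p\<in>set ps. fst p)"

definition pred_wf :: "'v pred \<Rightarrow> bool" where
  "pred_wf p \<longleftrightarrow> (\<forall>\<rho> \<rho>'. (\<forall>v\<in>fst p. \<rho> v = \<rho>' v) \<longrightarrow> snd p \<rho> = snd p \<rho>')"

text \<open>alpha(s): the unique abstract state described by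
  exists V(phi). (s /\ /\_i (phi_i <-> b_i)); the projected-away integer
  variables V(phi) are set to the dummy value 0.\<close>
definition alpha_st :: "'v pred list \<Rightarrow> 'v cstate \<Rightarrow> 'v astate" where
  "alpha_st ps s =
     ((\<lambda>x. case x of Inl v \<Rightarrow> fst s v | Inr i \<Rightarrow> i < length ps \<and> snd (ps ! i) (snd s)),
      (\<lambda>v. if v \<in> Vphi ps then 0 else snd s v))"

text \<open>The constraint CS, evaluated on a concrete transition (s,s') with
  b_i, b_i' the values of phi_i, phi_i'.\<close>
definition CS :: "'v pred list \<Rightarrow> 'v cstate \<Rightarrow> 'v cstate \<Rightarrow> bool" where
  "CS ps s s' \<longleftrightarrow> (\<forall>i<length ps.
      (\<forall>v\<in>fst (ps ! i). snd s' v = snd s v) \<longrightarrow>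
      (fst (alpha_st ps s') (Inr i) \<longleftrightarrow> fst (alpha_st ps s) (Inr i)))"

definition abs_ts :: "'v pred list \<Rightarrow> 'v cstate ts \<Rightarrow> 'v astate ts" where
  "abs_ts ps T =
     \<lparr> St = alpha_st ps ` St T,
       Init = alpha_st ps ` Init T,
       Rel = {(alpha_st ps s, alpha_st ps s') | s s'. (s, s') \<in> Rel T \<and> CS ps s s'} \<rparr>"

text \<open>gamma(a) = a[phi/b]: evaluate the abstract state formula a with b_i := phi_i.\<close>
definition gamma_atom :: "'v pred list \<Rightarrow> ('v astate \<Rightarrow> bool) \<Rightarrow> ('v cstate \<Rightarrow> bool)" where
  "gamma_atom ps a = (\<lambda>s. a (alpha_st ps s))"

definition gamma :: "'v pred list \<Rightarrow> 'v astate actl \<Rightarrow> 'v cstate actl" where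
  "gamma ps f = map_atoms (gamma_atom ps) f"

text \<open>An abstract state formula is over V# = (Vb \<union> {b_i}) plus (Vi - V(phi)).\<close>
definition over_abs_vars :: "'v set \<Rightarrow> 'v set \<Rightarrow> 'v pred list \<Rightarrow> ('v astate \<Rightarrow> bool) \<Rightarrow> bool" where
  "over_abs_vars Vb Vi ps a \<longleftrightarrow>
     (\<forall>x y. (\<forall>v\<in>Inl ` Vb \<union> Inr ` {..<length ps}. fst x v = fst y v) \<longrightarrow>
            (\<forall>v\<in>Vi - Vphi ps. snd x v = snd y v) \<longrightarrow> a x = a y)"

end

theory Submission
  imports Defs
begin

text \<open>The abstraction map alpha is a homomorphism of transition systems: every concrete
  step is mapped to an abstract step, because the side condition CS holds automatically
  for predicates that depend only on their own variables.  Since gamma is the pullback of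
  the atoms along alpha and every concrete path is mapped onto an abstract path, the
  universal path quantifiers of ACTL transfer from the abstract system to the concrete one.\<close>

lemma paths_map:
  assumes "map_prod h h ` R \<subseteq> R'" and "\<pi> \<in> paths R s"
  shows "h \<circ> \<pi> \<in> paths R' (h s)"
  using assms unfolding paths_def by fastforce

lemma holds_map_atoms_comp:
  assumes hom: "map_prod h h ` R \<subseteq> R'" and "holds R' f (h s)"
  shows "holds R (map_atoms (\<lambda>a. a \<circ> h) f) s"
  using assms(2)
proof (induction f arbitrary: s)
  case (AX f)
  show ?case
  proof (simp only: map_atoms.simps holds.simps, intro ballI)
    fix \<pi> assume "\<pi> \<in> paths R s"
    then have "h \<circ> \<pi> \<in> paths R' (h s)" by (rule paths_map[OF hom])
    with AX.prems have "holds R' f (h (\<pi> 1))" by auto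
    then show "holds R (map_atoms (\<lambda>a. a \<circ> h) f) (\<pi> 1)" by (rule AX.IH)
  qed
next
  case (AU f g)
  show ?case
  proof (simp only: map_atoms.simps holds.simps, intro ballI)
    fix \<pi> assume "\<pi> \<in> paths R s"
    then have "h \<circ> \<pi> \<in> paths R' (h s)" by (rule paths_map[OF hom])
    with AU.prems obtain k where "holds R' g (h (\<pi> k))"
      and "\<forall>j<k. holds R' f (h (\<pi> j))"
      by fastforce
    then show "\<exists>k. holds R (map_atoms (\<lambda>a. a \<circ> h) g) (\<pi> k) \<and>
        (\<forall>j<k. holds R (map_atoms (\<lambda>a. a \<circ> h) f) (\<pi> j))"
      using AU.IH by blast
  qed
next
  case (AR f g)
  show ?case
  proof (simp only: map_atoms.simps holds.simps, intro ballI allI)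
    fix \<pi> k assume "\<pi> \<in> paths R s"
    then have "h \<circ> \<pi> \<in> paths R' (h s)" by (rule paths_map[OF hom])
    with AR.prems have "holds R' g (h (\<pi> k)) \<or> (\<exists>j<k. holds R' f (h (\<pi> j)))"
      by fastforce
    then show "holds R (map_atoms (\<lambda>a. a \<circ> h) g) (\<pi> k) \<or>
        (\<exists>j<k. holds R (map_atoms (\<lambda>a. a \<circ> h) f) (\<pi> j))"
      using AR.IH by blast
  qed
qed auto

lemma CS_if_pred_wf:
  assumes "\<forall>p\<in>set ps. pred_wf p"
  shows "CS ps s s'"
  unfolding CS_def
proof (intro allI impI)
  fix i assume i: "i < length ps" and unchanged: "\<forall>v\<in>fst (ps ! i). snd s' v = snd s v"
  from assms i have "pred_wf (ps ! i)" by simp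
  with unchanged have "snd (ps ! i) (snd s') = snd (ps ! i) (snd s)"
    unfolding pred_wf_def by metis
  then show "fst (alpha_st ps s') (Inr i) = fst (alpha_st ps s) (Inr i)"
    by (simp add: alpha_st_def)
qed

lemma map_prod_alpha_st_Rel_subset:
  assumes "\<forall>p\<in>set ps. pred_wf p"
  shows "map_prod (alpha_st ps) (alpha_st ps) ` Rel T \<subseteq> Rel (abs_ts ps T)"
proof
  fix x assume "x \<in> map_prod (alpha_st ps) (alpha_st ps) ` Rel T"
  then obtain s s' where "(s, s') \<in> Rel T" and "x = (alpha_st ps s, alpha_st ps s')"
    by auto
  moreover have "CS ps s s'" using assms by (rule CS_if_pred_wf)
  ultimately show "x \<in> Rel (abs_ts ps T)" unfolding abs_ts_def ts.select_convs by blast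
qed

lemma gamma_eq_map_atoms_comp: "gamma ps f = map_atoms (\<lambda>a. a \<circ> alpha_st ps) f"
  unfolding gamma_def gamma_atom_def comp_def ..

theorem lemma7:
  fixes T :: "'v cstate ts" and Vb Vi :: "'v set" and ps :: "'v pred list"
    and f :: "'v astate actl"
  assumes "wf_ts T"
    and "Vb \<inter> Vi = {}"
    and "Vphi ps \<subseteq> Vi"
    and "\<forall>p\<in>set ps. pred_wf p"
    and "\<forall>a\<in>atoms f. over_abs_vars Vb Vi ps a"
    and "abs_ts ps T \<Turnstile> f"
  shows "T \<Turnstile> gamma ps f"
  unfolding models_def gamma_eq_map_atoms_comp
proof
  fix s assume "s \<in> Init T"
  with assms(6) have "holds (Rel (abs_ts ps T)) f (alpha_st ps s)"
    unfolding models_def abs_ts_def by simp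
  then show "holds (Rel T) (map_atoms (\<lambda>a. a \<circ> alpha_st ps) f) s"
    by (rule holds_map_atoms_comp[OF map_prod_alpha_st_Rel_subset[OF assms(4)]])
qed

end
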